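(* Let $G=(V,E)$ be a transient, connected, simple, locally finite graph with fixed vertex $o$ and fixed rotor mechanism $(m_x)_{x\in V}$. If $\rho_{\min}$ is a rotor configuration such that $w(\rho_{\min}(x))\le w(x,y)$ for every $x\in V$ and every outgoing edge $(x,y)$ of $x$, then for any $n\geq1$ and any $t\geq n$, \[ \frac{I_t(\rho_{\min},n)}{n}\geq \alpha_G. \]
   Context: For $x\in V$, $\mathcal{E}_x$ is the set of outgoing directed edges $(x,y)$ with $y$ a neighbor of $x$, and $\deg(x)=|\mathcal{E}_x|$. A rotor mechanism is a choice, for each $x$, of a bijection $m_x:\mathcal{E}_x\to\mathcal{E}_x$ with exactly one orbit. A rotor configuration is a map $\rho$ with $\rho(x)\in\mathcal{E}_x$ for each $x$. $\mathcal{G}(x)$ is the expected number of visits to $x$ by simple random walk on $G$ started at $o$; $\alpha_G$ is the probability that simple random walk started at $o$ never returns to $o$. Weight of a directed edge $(x,y)$: writing $(x,y_i):=m_x^i(x,y)$, \[ w(x,y):=\frac{-1}{\deg(x)}\sum_{i=0}^{\deg(x)-1} i\,\frac{\mathcal{G}(y_{i+1})}{\deg(y_{i+1})}. \] Experiment: given an initial rotor configuration $\rho$ and $n\ge1$, define $X_t^{(0)},\dots,X_t^{(n-1)}$ and $\rho_t$ ($t\ge0$) by: $X_0^{(i)}=o$ for all $i$, $\rho_0=\rho$. Let $i_t:=t+1\bmod n$. Particle $i$ has returned to $o$ by time $t$ if $X_t^{(i)}=o$ and $X_s^{(i)}\ne o$ for some $s<t$. If particle $i_t$ has returned to $o$ by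 time $t$, then $\rho_{t+1}=\rho_t$ and all positions stay the same. Otherwise $\rho_{t+1}(x)=m_x(\rho_t(x))$ for $x=X_t^{(i_t)}$ and $\rho_{t+1}(x)=\rho_t(x)$ otherwise; $X_{t+1}^{(i_t)}$ is the target vertex of $\rho_{t+1}(X_t^{(i_t)})$ and $X_{t+1}^{(i)}=X_t^{(i)}$ for $i\ne i_t$. $I_t(\rho,n)$ is the number of particles $i\in\{0,\dots,n-1\}$ that have not returned to $o$ by time $t$. *)

theory Defs
  imports Complex_Main
begin

text \<open>The vertex set V is the whole type 'v; the graph is given by a
symmetric irreflexive adjacency relation E.  Since the graph is simple, the
outgoing edge (x,y) is identified with its target y, so the set of outgoing
edges of x is identified with the set of neighbours of x.\<close>

definition nbrs :: "('v \<Rightarrow> 'v \<Rightarrow> bool) \<Rightarrow> 'v \<Rightarrow> 'v set" where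
  "nbrs E x = {y. E x y}"

definition deg :: "('v \<Rightarrow> 'v \<Rightarrow> bool) \<Rightarrow> 'v \<Rightarrow> nat" where
  "deg E x = card (nbrs E x)"

definition simple_graph :: "('v \<Rightarrow> 'v \<Rightarrow> bool) \<Rightarrow> bool" where
  "simple_graph E \<longleftrightarrow> (\<forall>x. \<not> E x x) \<and> (\<forall>x y. E x y \<longrightarrow> E y x)"

definition locally_finite :: "('v \<Rightarrow> 'v \<Rightarrow> bool) \<Rightarrow> bool" where
  "locally_finite E \<longleftrightarrow> (\<forall>x. finite (nbrs E x))"

definition connected_graph :: "('v \<Rightarrow> 'v \<Rightarrow> bool) \<Rightarrow> bool" where
  "connected_graph E \<longleftrightarrow> (\<forall>x y. (x, y) \<in> {(a, b). E a b}\<^sup>*)"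

primrec walk_prob :: "('v \<Rightarrow> 'v \<Rightarrow> bool) \<Rightarrow> 'v \<Rightarrow> nat \<Rightarrow> 'v \<Rightarrow> real" where
  "walk_prob E v0 0 x = (if x = v0 then 1 else 0)"
| "walk_prob E v0 (Suc k) y = (\<Sum>z\<in>{z. E z y}. walk_prob E v0 k z / real (deg E z))"

text \<open>Green function: expected number of visits to x (time 0 included).\<close>

definition green :: "('v \<Rightarrow> 'v \<Rightarrow> bool) \<Rightarrow> 'v \<Rightarrow> 'v \<Rightarrow> real" where
  "green E v0 x = (\<Sum>k. walk_prob E v0 k x)"

text \<open>taboo_prob E v0 k x = probability that the walk started at v0 is at x at
time k and has not visited v0 at any time 1,...,k-1.  Hence for k \<ge> 1,
taboo_prob E v0 k v0 is the probability that the first return to v0 happens at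
time k.\<close>

primrec taboo_prob :: "('v \<Rightarrow> 'v \<Rightarrow> bool) \<Rightarrow> 'v \<Rightarrow> nat \<Rightarrow> 'v \<Rightarrow> real" where
  "taboo_prob E v0 0 x = (if x = v0 then 1 else 0)"
| "taboo_prob E v0 (Suc k) y =
     (\<Sum>z\<in>{z. E z y}. (if z = v0 \<and> 0 < k then 0 else taboo_prob E v0 k z / real (deg E z)))"

definition return_prob :: "('v \<Rightarrow> 'v \<Rightarrow> bool) \<Rightarrow> 'v \<Rightarrow> real" where
  "return_prob E v0 = (\<Sum>k. taboo_prob E v0 (Suc k) v0)"

definition escape_prob :: "('v \<Rightarrow> 'v \<Rightarrow> bool) \<Rightarrow> 'v \<Rightarrow> real" where
  "escape_prob E v0 = 1 - return_prob E v0"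

definition transient :: "('v \<Rightarrow> 'v \<Rightarrow> bool) \<Rightarrow> 'v \<Rightarrow> bool" where
  "transient E v0 \<longleftrightarrow> return_prob E v0 < 1"

definition rotor_mechanism :: "('v \<Rightarrow> 'v \<Rightarrow> bool) \<Rightarrow> ('v \<Rightarrow> 'v \<Rightarrow> 'v) \<Rightarrow> bool" where
  "rotor_mechanism E m \<longleftrightarrow>
     (\<forall>x. bij_betw (m x) (nbrs E x) (nbrs E x) \<and> nbrs E x \<noteq> {} \<and>
          (\<forall>y\<in>nbrs E x. \<forall>z\<in>nbrs E x. \<exists>k. (m x ^^ k) y = z))"

definition rotor_config :: "('v \<Rightarrow> 'v \<Rightarrow> bool) \<Rightarrow> ('v \<Rightarrow> 'v) \<Rightarrow> bool" where
  "rotor_config E \<rho> \<longleftrightarrow> (\<forall>x. \<rho> x \<in> nbrs E x)"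

definition weight :: "('v \<Rightarrow> 'v \<Rightarrow> bool) \<Rightarrow> 'v \<Rightarrow> ('v \<Rightarrow> 'v \<Rightarrow> 'v) \<Rightarrow> 'v \<Rightarrow> 'v \<Rightarrow> real" where
  "weight E v0 m x y =
     (-1 / real (deg E x)) *
     (\<Sum>i<deg E x. real i * (green E v0 ((m x ^^ (Suc i)) y) / real (deg E ((m x ^^ (Suc i)) y))))"

text \<open>rotor_hist m v0 \<rho> n t is the list of states (\<rho>_s, X_s) for s = 0..t,
where X_s i is the position of particle i at time s.\<close>

primrec rotor_hist ::
  "('v \<Rightarrow> 'v \<Rightarrow> 'v) \<Rightarrow> 'v \<Rightarrow> ('v \<Rightarrow> 'v) \<Rightarrow> nat \<Rightarrow> nat \<Rightarrow> (('v \<Rightarrow> 'v) \<times> (nat \<Rightarrow> 'v)) list" where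
  "rotor_hist m v0 \<rho> n 0 = [(\<rho>, \<lambda>i. v0)]"
| "rotor_hist m v0 \<rho> n (Suc t) =
     (let hs = rotor_hist m v0 \<rho> n t;
          r = fst (hs ! t);
          X = snd (hs ! t);
          i = Suc t mod n
      in hs @ [if X i = v0 \<and> (\<exists>s<t. snd (hs ! s) i \<noteq> v0) then (r, X)
               else (let x = X i; r' = r(x := m x (r x)) in (r', X(i := r' x)))])"

definition pos :: "('v \<Rightarrow> 'v \<Rightarrow> 'v) \<Rightarrow> 'v \<Rightarrow> ('v \<Rightarrow> 'v) \<Rightarrow> nat \<Rightarrow> nat \<Rightarrow> nat \<Rightarrow> 'v" where
  "pos m v0 \<rho> n t i = snd (rotor_hist m v0 \<rho> n t ! t) i"

definition returned :: "('v \<Rightarrow> 'v \<Rightarrow> 'v) \<Rightarrow> 'v \<Rightarrow> ('v \<Rightarrow> 'v) \<Rightarrow> nat \<Rightarrow> nat \<Rightarrow> nat \<Rightarrow> bool" where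
  "returned m v0 \<rho> n t i \<longleftrightarrow> pos m v0 \<rho> n t i = v0 \<and> (\<exists>s<t. pos m v0 \<rho> n s i \<noteq> v0)"

definition I_count :: "('v \<Rightarrow> 'v \<Rightarrow> 'v) \<Rightarrow> 'v \<Rightarrow> ('v \<Rightarrow> 'v) \<Rightarrow> nat \<Rightarrow> nat \<Rightarrow> nat" where
  "I_count m v0 \<rho> n t = card {i. i < n \<and> \<not> returned m v0 \<rho> n t i}"

end

theory Submission
  imports Defs
begin

text \<open>
  Write \<open>h(x) = G(x) / deg(x)\<close>.  The Green function satisfies
  \<open>G(y) = [y = o] + (\<Sum>z\<sim>y. h(z))\<close>, and summing the rotor weights by parts shows
  that turning the rotor at \<open>x\<close> from \<open>(x,y)\<close> to \<open>m\<^sub>x(x,y)\<close> changes its weight by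
  \<open>h(x) - h(m\<^sub>x y) - [x = o]/deg(o)\<close>.  Hence, along the experiment, the quantity
  \<open>\<Sum>\<^sub>i h(X\<^sub>t\<^sup>i) + \<Sum>\<^sub>x (w(\<rho>\<^sub>t(x)) - w(\<rho>(x))) + D\<^sub>t/deg(o)\<close> is constant, equal to
  \<open>n h(o)\<close>, where \<open>D\<^sub>t\<close> counts the moves out of \<open>o\<close>.  For \<open>\<rho> = \<rho>\<^sub>m\<^sub>i\<^sub>n\<close> the weight
  differences are nonnegative, every particle leaves \<open>o\<close> in its first step (so
  \<open>D\<^sub>t \<ge> n\<close> once \<open>t \<ge> n\<close>), and every returned particle sits at \<open>o\<close>.  This gives
  \<open>#returned \<cdot> G(o) + n \<le> n G(o)\<close>, i.e. \<open>n \<le> I\<^sub>t G(o)\<close>, and the renewal equation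
  gives \<open>G(o) \<le> 1/\<alpha>\<^sub>G\<close>.
\<close>

section \<open>Simple random walk\<close>

locale walk_graph =
  fixes E :: "'v \<Rightarrow> 'v \<Rightarrow> bool" and v0 :: 'v
  assumes sym: "E x y \<Longrightarrow> E y x"
    and finite_nbrs: "finite (nbrs E x)"
    and nbrs_nonempty: "nbrs E x \<noteq> {}"
begin

lemma in_nbrs_iff: "z \<in> nbrs E y \<longleftrightarrow> E z y"
  using sym by (auto simp: nbrs_def)

lemma deg_pos: "0 < deg E x"
  using finite_nbrs nbrs_nonempty by (simp add: deg_def card_gt_0_iff)

lemma walk_prob_Suc:
  "walk_prob E v0 (Suc k) y = (\<Sum>z\<in>nbrs E y. walk_prob E v0 k z / real (deg E z))"
  by (simp add: in_nbrs_iff[symmetric])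

lemma taboo_prob_Suc:
  "taboo_prob E v0 (Suc k) y =
     (\<Sum>z\<in>nbrs E y. if z = v0 \<and> 0 < k then 0 else taboo_prob E v0 k z / real (deg E z))"
  by (simp add: in_nbrs_iff[symmetric])

declare walk_prob.simps(2)[simp del] taboo_prob.simps(2)[simp del]

lemma walk_prob_nonneg: "0 \<le> walk_prob E v0 k x"
  by (induction k arbitrary: x) (auto simp: walk_prob_Suc intro!: sum_nonneg divide_nonneg_nonneg)

lemma taboo_prob_nonneg: "0 \<le> taboo_prob E v0 k x"
  by (induction k arbitrary: x) (auto simp: taboo_prob_Suc intro!: sum_nonneg divide_nonneg_nonneg)

lemma walk_prob_Suc_0: "walk_prob E v0 (Suc 0) y = (if v0 \<in> nbrs E y then 1 / real (deg E v0) else 0)"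
proof -
  have "walk_prob E v0 (Suc 0) y = (\<Sum>z\<in>nbrs E y. if z = v0 then 1 / real (deg E v0) else 0)"
    unfolding walk_prob_Suc by (rule sum.cong) auto
  then show ?thesis using finite_nbrs[of y] by simp
qed

text \<open>\<open>ball k\<close> is a finite set containing the support of \<open>taboo_prob E v0 k\<close>, so on an
  infinite graph the total mass of the killed walk is still a finite sum.\<close>

primrec ball :: "nat \<Rightarrow> 'v set" where
  "ball 0 = {v0}"
| "ball (Suc k) = ball k \<union> (\<Union>z\<in>ball k. nbrs E z)"

lemma finite_ball: "finite (ball k)"
  by (induction k) (auto simp: finite_nbrs)

lemma root_in_ball: "v0 \<in> ball k"
  by (induction k) auto

lemma taboo_prob_support: "taboo_prob E v0 k x \<noteq> 0 \<Longrightarrow> x \<in> ball k"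
proof (induction k arbitrary: x)
  case 0
  then show ?case by (auto split: if_splits)
next
  case (Suc k)
  have "(\<Sum>z\<in>nbrs E x. if z = v0 \<and> 0 < k then 0 else taboo_prob E v0 k z / real (deg E z)) \<noteq> 0"
    using Suc.prems unfolding taboo_prob_Suc .
  then obtain z where "z \<in> nbrs E x"
    and "(if z = v0 \<and> 0 < k then 0 else taboo_prob E v0 k z / real (deg E z)) \<noteq> 0"
    by (rule sum.not_neutral_contains_not_neutral)
  then have "z \<in> nbrs E x" "taboo_prob E v0 k z \<noteq> 0"
    by (auto split: if_splits)
  with Suc.IH[of z] sym show ?case by (auto simp: nbrs_def)
qed

lemma sum_sum_nbrs_divide_deg:
  fixes g :: "'v \<Rightarrow> real"
  assumes "finite A" "finite S" "\<And>z. g z \<noteq> 0 \<Longrightarrow> z \<in> S"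
    and "\<And>z. z \<in> S \<Longrightarrow> nbrs E z \<subseteq> A"
  shows "(\<Sum>y\<in>A. \<Sum>z\<in>nbrs E y. g z / real (deg E z)) = (\<Sum>z\<in>S. g z)"
proof -
  have "(\<Sum>y\<in>A. \<Sum>z\<in>nbrs E y. g z / real (deg E z))
      = (\<Sum>y\<in>A. \<Sum>z\<in>S. if E z y then g z / real (deg E z) else 0)"
  proof (rule sum.cong[OF refl])
    fix y
    have "(\<Sum>z\<in>nbrs E y. g z / real (deg E z)) = (\<Sum>z\<in>nbrs E y \<inter> S. g z / real (deg E z))"
      by (rule sum.mono_neutral_right) (use finite_nbrs assms(3) in auto)
    also have "\<dots> = (\<Sum>z\<in>S. if E z y then g z / real (deg E z) else 0)"
      using assms(2) by (simp add: sum.inter_restrict in_nbrs_iff Int_commute)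
    finally show "(\<Sum>z\<in>nbrs E y. g z / real (deg E z)) = \<dots>" .
  qed
  also have "\<dots> = (\<Sum>z\<in>S. \<Sum>y\<in>A. if E z y then g z / real (deg E z) else 0)"
    by (rule sum.swap)
  also have "\<dots> = (\<Sum>z\<in>S. g z)"
  proof (rule sum.cong[OF refl])
    fix z assume "z \<in> S"
    then have "A \<inter> nbrs E z = nbrs E z" using assms(4) by blast
    then show "(\<Sum>y\<in>A. if E z y then g z / real (deg E z) else 0) = g z"
      using assms(1) deg_pos[of z] by (simp add: sum.If_cases deg_def nbrs_def)
  qed
  finally show ?thesis .
qed

definition taboo_mass :: "nat \<Rightarrow> real" where
  "taboo_mass k = (\<Sum>x\<in>ball k. taboo_prob E v0 k x)"

lemma taboo_mass_Suc:
  "taboo_mass (Suc k) = taboo_mass k - (if 0 < k then taboo_prob E v0 k v0 else 0)"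
proof -
  define g where "g z = (if z = v0 \<and> 0 < k then 0 else taboo_prob E v0 k z)" for z
  have "taboo_mass (Suc k) = (\<Sum>y\<in>ball (Suc k). \<Sum>z\<in>nbrs E y. g z / real (deg E z))"
    unfolding taboo_mass_def taboo_prob_Suc g_def by (intro sum.cong) auto
  also have "\<dots> = (\<Sum>z\<in>ball k. g z)"
    by (rule sum_sum_nbrs_divide_deg)
      (use finite_ball finite_nbrs taboo_prob_support in \<open>auto simp: g_def split: if_splits\<close>)
  also have "\<dots> = taboo_mass k - (if 0 < k then taboo_prob E v0 k v0 else 0)"
    using finite_ball[of k] root_in_ball[of k] unfolding taboo_mass_def g_def
    by (auto simp: sum.If_cases Diff_eq[symmetric] sum_diff1)
  finally show ?thesis .
qed

lemma taboo_mass_nonneg: "0 \<le> taboo_mass k"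
  unfolding taboo_mass_def by (auto intro!: sum_nonneg taboo_prob_nonneg)

lemma taboo_mass_eq: "taboo_mass (Suc K) = 1 - (\<Sum>k<K. taboo_prob E v0 (Suc k) v0)"
proof (induction K)
  case 0
  show ?case using taboo_mass_Suc[of 0] by (simp add: taboo_mass_def)
next
  case (Suc K)
  then show ?case using taboo_mass_Suc[of "Suc K"] by simp
qed

lemma summable_first_return: "summable (\<lambda>k. taboo_prob E v0 (Suc k) v0)"
proof (rule summableI_nonneg_bounded)
  show "0 \<le> taboo_prob E v0 (Suc k) v0" for k
    by (rule taboo_prob_nonneg)
  show "(\<Sum>k<K. taboo_prob E v0 (Suc k) v0) \<le> 1" for K
    using taboo_mass_eq[of K] taboo_mass_nonneg[of "Suc K"] by simp
qed

lemma return_prob_nonneg: "0 \<le> return_prob E v0"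
  unfolding return_prob_def by (rule suminf_nonneg[OF summable_first_return taboo_prob_nonneg])

lemma sum_first_return_le: "(\<Sum>j<K. taboo_prob E v0 (Suc j) v0) \<le> return_prob E v0"
  unfolding return_prob_def
  by (rule sum_le_suminf[OF summable_first_return]) (auto intro: taboo_prob_nonneg)

lemma walk_prob_renewal:
  "walk_prob E v0 (Suc k) y = taboo_prob E v0 (Suc k) y +
     (\<Sum>j<k. taboo_prob E v0 (Suc j) v0 * walk_prob E v0 (k - j) y)"
proof (induction k arbitrary: y)
  case 0
  show ?case by (simp add: walk_prob_Suc taboo_prob_Suc)
next
  case (Suc k)
  let ?p = "walk_prob E v0" and ?f = "\<lambda>j. taboo_prob E v0 j v0"
  have "?p (Suc (Suc k)) y = (\<Sum>z\<in>nbrs E y. taboo_prob E v0 (Suc k) z / real (deg E z)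
        + (\<Sum>j<k. ?f (Suc j) * (?p (k - j) z / real (deg E z))))"
    unfolding walk_prob_Suc[of "Suc k"]
    by (intro sum.cong refl) (simp add: Suc.IH add_divide_distrib sum_divide_distrib)
  also have "\<dots> = (\<Sum>z\<in>nbrs E y. taboo_prob E v0 (Suc k) z / real (deg E z))
        + (\<Sum>j<k. ?f (Suc j) * ?p (Suc (k - j)) y)"
    by (simp add: sum.distrib sum.swap[of _ _ "nbrs E y"] sum_distrib_left walk_prob_Suc)
  also have "(\<Sum>z\<in>nbrs E y. taboo_prob E v0 (Suc k) z / real (deg E z))
      = taboo_prob E v0 (Suc (Suc k)) y + ?f (Suc k) * ?p (Suc 0) y"
    using finite_nbrs[of y]
    by (simp add: taboo_prob_Suc[of "Suc k"] walk_prob_Suc_0 sum.If_cases sum_diff1 Diff_eq[symmetric])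
  finally show ?case
    by (simp add: Suc_diff_le)
qed

lemma sum_walk_prob_root_Suc_le:
  "(\<Sum>k<Suc K. walk_prob E v0 k v0) \<le> 1 + return_prob E v0 * (\<Sum>k<K. walk_prob E v0 k v0)"
proof -
  let ?p = "\<lambda>k. walk_prob E v0 k v0" and ?f = "\<lambda>j. taboo_prob E v0 (Suc j) v0"
  let ?S = "\<Sum>k<K. ?p k"
  have "(\<Sum>k<K. ?p (Suc k)) = (\<Sum>k<K. \<Sum>j<K. if j \<le> k then ?f j * ?p (k - j) else 0)"
  proof (intro sum.cong refl)
    fix k assume "k \<in> {..<K}"
    then have "{..<K} \<inter> {j. j \<le> k} = {..<Suc k}" by auto
    then show "?p (Suc k) = (\<Sum>j<K. if j \<le> k then ?f j * ?p (k - j) else 0)"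
      using walk_prob_renewal[of k v0] by (simp add: sum.If_cases)
  qed
  also have "\<dots> = (\<Sum>j<K. ?f j * (\<Sum>k<K. if j \<le> k then ?p (k - j) else 0))"
    by (subst sum.swap) (simp add: sum_distrib_left if_distrib cong: if_cong)
  also have "\<dots> \<le> (\<Sum>j<K. ?f j * ?S)"
  proof (rule sum_mono, rule mult_left_mono[OF _ taboo_prob_nonneg])
    fix j
    have "(\<Sum>k<K. if j \<le> k then ?p (k - j) else 0) = (\<Sum>k\<in>{j..<K}. ?p (k - j))"
      by (simp add: sum.If_cases) (intro sum.cong, auto)
    also have "\<dots> = (\<Sum>i\<in>(\<lambda>k. k - j) ` {j..<K}. ?p i)"
      by (subst sum.reindex) (auto simp: inj_on_def)
    also have "\<dots> \<le> ?S"
      by (rule sum_mono2) (auto intro: walk_prob_nonneg)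
    finally show "(\<Sum>k<K. if j \<le> k then ?p (k - j) else 0) \<le> ?S" .
  qed
  also have "\<dots> \<le> return_prob E v0 * ?S"
    unfolding sum_distrib_right[symmetric]
    by (rule mult_right_mono[OF sum_first_return_le]) (auto intro: sum_nonneg walk_prob_nonneg)
  finally show ?thesis
    by (simp add: sum.lessThan_Suc_shift del: sum.lessThan_Suc)
qed

lemma sum_walk_prob_root_le:
  assumes "transient E v0"
  shows "(\<Sum>k<K. walk_prob E v0 k v0) \<le> 1 / escape_prob E v0"
proof -
  let ?S = "\<lambda>K. \<Sum>k<K. walk_prob E v0 k v0"
  have mono: "?S K \<le> ?S (Suc K)"
    by (simp add: walk_prob_nonneg)
  have "?S (Suc K) \<le> 1 + return_prob E v0 * ?S (Suc K)"
    using sum_walk_prob_root_Suc_le[of K] mult_left_mono[OF mono return_prob_nonneg] by linarith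
  then have "?S (Suc K) * escape_prob E v0 \<le> 1"
    by (simp add: escape_prob_def algebra_simps)
  then have "?S (Suc K) \<le> 1 / escape_prob E v0"
    using assms by (simp add: transient_def escape_prob_def field_simps)
  with mono show ?thesis by linarith
qed

end

locale transient_walk_graph = walk_graph +
  assumes transient: "transient E v0"
    and reachable: "(v0, x) \<in> {(a, b). E a b}\<^sup>*"
begin

lemma escape_prob_pos: "0 < escape_prob E v0"
  using transient by (simp add: transient_def escape_prob_def)

lemma summable_walk_prob_root: "summable (\<lambda>k. walk_prob E v0 k v0)"
  by (rule summableI_nonneg_bounded[OF walk_prob_nonneg sum_walk_prob_root_le[OF transient]])

lemma green_root_le: "green E v0 v0 \<le> 1 / escape_prob E v0"
  unfolding green_def
  by (rule suminf_le_const[OF summable_walk_prob_root sum_walk_prob_root_le[OF transient]])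

lemma summable_walk_prob_nbr:
  assumes "summable (\<lambda>k. walk_prob E v0 k y)" and "z \<in> nbrs E y"
  shows "summable (\<lambda>k. walk_prob E v0 k z)"
proof (rule summableI_nonneg_bounded[OF walk_prob_nonneg])
  fix K
  have "walk_prob E v0 k z / real (deg E z) \<le> walk_prob E v0 (Suc k) y" for k
    unfolding walk_prob_Suc
    by (rule member_le_sum) (use assms(2) finite_nbrs in \<open>auto intro!: divide_nonneg_nonneg walk_prob_nonneg\<close>)
  then have "walk_prob E v0 k z \<le> real (deg E z) * walk_prob E v0 (Suc k) y" for k
    using deg_pos[of z] by (simp add: field_simps)
  then have "(\<Sum>k<K. walk_prob E v0 k z) \<le> real (deg E z) * (\<Sum>k<K. walk_prob E v0 (Suc k) y)"
    by (simp add: sum_distrib_left sum_mono)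
  also have "(\<Sum>k<K. walk_prob E v0 (Suc k) y) \<le> (\<Sum>k<Suc K. walk_prob E v0 k y)"
    by (simp add: sum.lessThan_Suc_shift walk_prob_nonneg del: sum.lessThan_Suc)
  also have "\<dots> \<le> green E v0 y"
    unfolding green_def by (rule sum_le_suminf[OF assms(1)]) (auto intro: walk_prob_nonneg)
  finally show "(\<Sum>k<K. walk_prob E v0 k z) \<le> real (deg E z) * green E v0 y"
    by (simp add: mult_left_mono)
qed

lemma summable_walk_prob: "summable (\<lambda>k. walk_prob E v0 k x)"
  using reachable[of x]
proof (induction rule: rtrancl_induct)
  case base
  show ?case by (rule summable_walk_prob_root)
next
  case (step y x)
  then show ?case using summable_walk_prob_nbr[of y x] by (simp add: in_nbrs_iff sym)
qed

lemma green_nonneg: "0 \<le> green E v0 x"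
  unfolding green_def by (rule suminf_nonneg[OF summable_walk_prob walk_prob_nonneg])

lemma green_harmonic:
  "green E v0 y = (if y = v0 then 1 else 0) + (\<Sum>z\<in>nbrs E y. green E v0 z / real (deg E z))"
proof -
  have "green E v0 y = walk_prob E v0 0 y + (\<Sum>k. walk_prob E v0 (Suc k) y)"
    unfolding green_def using suminf_split_head[OF summable_walk_prob[of y]] by simp
  also have "(\<Sum>k. walk_prob E v0 (Suc k) y) = (\<Sum>z\<in>nbrs E y. \<Sum>k. walk_prob E v0 k z / real (deg E z))"
    unfolding walk_prob_Suc by (rule suminf_sum) (intro summable_divide summable_walk_prob)
  also have "\<dots> = (\<Sum>z\<in>nbrs E y. green E v0 z / real (deg E z))"
    unfolding green_def by (intro sum.cong refl suminf_divide summable_walk_prob)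
  finally show ?thesis by simp
qed

end

section \<open>Rotor weights\<close>

lemma funpow_returns_within_card:
  assumes bij: "bij_betw f N N" and "finite N" and "y \<in> N"
  obtains p where "0 < p" "p \<le> card N" "(f ^^ p) y = y"
proof -
  define g where "g k = (f ^^ k) y" for k
  have g_in: "g k \<in> N" for k
    unfolding g_def using bij_betw_apply[OF bij_betw_funpow[OF bij] \<open>y \<in> N\<close>] .
  have "\<not> inj_on g {..card N}"
  proof
    assume "inj_on g {..card N}"
    then have "card (g ` {..card N}) = Suc (card N)"
      by (simp add: card_image)
    moreover have "card (g ` {..card N}) \<le> card N"
      using g_in by (intro card_mono \<open>finite N\<close>) auto
    ultimately show False by simp
  qed
  then obtain a b where ab: "a < b" "b \<le> card N" "g a = g b"
    unfolding inj_on_def by (metis atMost_iff linorder_neqE_nat order.strict_trans1)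
  then have "(f ^^ a) ((f ^^ (b - a)) y) = (f ^^ a) y"
    by (simp add: g_def flip: funpow_add[unfolded comp_def, THEN fun_cong])
  then have "(f ^^ (b - a)) y = y"
    using bij_betw_imp_inj_on[OF bij_betw_funpow[OF bij, of a]] g_in \<open>y \<in> N\<close>
    by (simp add: g_def inj_on_eq_iff)
  with ab show ?thesis
    using that[of "b - a"] by simp
qed

lemma single_orbit_enumeration:
  assumes bij: "bij_betw f N N" and "finite N" and "y \<in> N"
    and orbit: "\<forall>z\<in>N. \<exists>k. (f ^^ k) y = z"
  shows "(f ^^ card N) y = y" and "bij_betw (\<lambda>i. (f ^^ i) y) {..<card N} N"
proof -
  obtain p where p: "0 < p" "p \<le> card N" "(f ^^ p) y = y"
    using funpow_returns_within_card[OF assms(1-3)] .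
  have sub: "(\<lambda>i. (f ^^ i) y) ` {..<p} \<subseteq> N"
    using bij_betw_apply[OF bij_betw_funpow[OF bij] \<open>y \<in> N\<close>] by auto
  have sup: "N \<subseteq> (\<lambda>i. (f ^^ i) y) ` {..<p}"
  proof
    fix z assume "z \<in> N"
    then obtain k where "(f ^^ k) y = z"
      using orbit by blast
    then have "(f ^^ (k mod p)) y = z"
      using funpow_mod_eq[of p f y k] p(3) by simp
    then show "z \<in> (\<lambda>i. (f ^^ i) y) ` {..<p}"
      using p(1) by force
  qed
  have "card N \<le> p"
    using card_mono[OF _ sup] card_image_le[of "{..<p}" "\<lambda>i. (f ^^ i) y"] by simp
  then have p_eq: "p = card N"
    using p(2) by simp
  then show "(f ^^ card N) y = y"
    using p(3) by simp
  have img: "(\<lambda>i. (f ^^ i) y) ` {..<card N} = N"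
    using sub sup p_eq by blast
  then show "bij_betw (\<lambda>i. (f ^^ i) y) {..<card N} N"
    unfolding bij_betw_def by (simp add: eq_card_imp_inj_on)
qed

lemma sum_lessThan_shift_periodic:
  fixes a :: "nat \<Rightarrow> 'a::cancel_comm_monoid_add"
  assumes "a d = a 0"
  shows "(\<Sum>i<d. a (Suc i)) = (\<Sum>i<d. a i)"
proof -
  have "a 0 + (\<Sum>i<d. a (Suc i)) = (\<Sum>i<Suc d. a i)"
    by (rule sum.lessThan_Suc_shift[symmetric])
  also have "\<dots> = a 0 + (\<Sum>i<d. a i)"
    using assms by (simp add: add.commute)
  finally show ?thesis by simp
qed

lemma sum_index_times_Suc:
  fixes b :: "nat \<Rightarrow> real"
  shows "(\<Sum>i<d. real i * b (Suc i)) =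
     (\<Sum>i<d. real i * b i) - (\<Sum>i<d. b i) + real d * b d + b 0 - b d"
  by (induction d) (simp_all add: algebra_simps)

lemma sum_fun_upd:
  fixes \<phi> :: "'a \<Rightarrow> 'b \<Rightarrow> 'c::ab_group_add"
  assumes "finite A" "i \<in> A"
  shows "(\<Sum>j\<in>A. \<phi> j ((f(i := v)) j)) = (\<Sum>j\<in>A. \<phi> j (f j)) - \<phi> i (f i) + \<phi> i v"
proof -
  have "(\<Sum>j\<in>A - {i}. \<phi> j ((f(i := v)) j)) = (\<Sum>j\<in>A - {i}. \<phi> j (f j))"
    by (rule sum.cong) auto
  then show ?thesis
    using assms by (simp add: sum.remove algebra_simps)
qed

locale rotor_walk = transient_walk_graph E v0 for E :: "'v \<Rightarrow> 'v \<Rightarrow> bool" and v0 +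
  fixes m :: "'v \<Rightarrow> 'v \<Rightarrow> 'v"
  assumes rotor_mechanism: "rotor_mechanism E m"
begin

definition potential :: "'v \<Rightarrow> real" where
  "potential z = green E v0 z / real (deg E z)"

lemma potential_nonneg: "0 \<le> potential z"
  unfolding potential_def by (simp add: green_nonneg)

lemma rotor_in_nbrs: "y \<in> nbrs E x \<Longrightarrow> m x y \<in> nbrs E x"
  using rotor_mechanism by (auto simp: rotor_mechanism_def dest: bij_betw_apply)

lemma rotor_orbit:
  assumes "y \<in> nbrs E x"
  shows "(m x ^^ deg E x) y = y" and "bij_betw (\<lambda>i. (m x ^^ i) y) {..<deg E x} (nbrs E x)"
  using single_orbit_enumeration[of "m x" "nbrs E x" y] rotor_mechanism assms finite_nbrs
  by (simp_all add: rotor_mechanism_def deg_def)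

lemma weight_rotate:
  assumes y: "y \<in> nbrs E x"
  shows "weight E v0 m x (m x y) - weight E v0 m x y
     = potential x - potential (m x y) - (if x = v0 then 1 / real (deg E v0) else 0)"
proof -
  define d where "d = deg E x"
  define b where "b k = potential ((m x ^^ Suc k) y)" for k
  have d_pos: "0 < real d"
    using deg_pos by (simp add: d_def)
  have w: "weight E v0 m x y = - (\<Sum>i<d. real i * b i) / real d"
    unfolding weight_def b_def d_def potential_def by simp
  have w': "weight E v0 m x (m x y) = - (\<Sum>i<d. real i * b (Suc i)) / real d"
    unfolding weight_def b_def d_def potential_def by (simp add: funpow_Suc_right del: funpow.simps)
  have period: "b d = b 0"
    using rotor_orbit(1)[OF y] by (simp add: b_def d_def funpow_swap1)
  have "(\<Sum>i<d. b i) = (\<Sum>i<d. potential ((m x ^^ i) y))"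
    using sum_lessThan_shift_periodic[of "\<lambda>i. potential ((m x ^^ i) y)" d] rotor_orbit(1)[OF y]
    by (simp add: b_def d_def)
  also have "\<dots> = (\<Sum>z\<in>nbrs E x. potential z)"
    unfolding d_def by (rule sum.reindex_bij_betw[OF rotor_orbit(2)[OF y]])
  also have "\<dots> = real d * potential x - (if x = v0 then 1 else 0)"
    using green_harmonic[of x] d_pos by (simp add: potential_def d_def)
  finally have sum_b: "(\<Sum>i<d. b i) = real d * potential x - (if x = v0 then 1 else 0)" .
  have b_0: "b 0 = potential (m x y)"
    by (simp add: b_def)
  show ?thesis
    unfolding w w' sum_index_times_Suc period sum_b b_0 using d_pos deg_pos[of v0]
    by (cases "x = v0") (simp_all add: field_simps d_def)
qed

end

section \<open>The experiment\<close>

definition rotors :: "('v \<Rightarrow> 'v \<Rightarrow> 'v) \<Rightarrow> 'v \<Rightarrow> ('v \<Rightarrow> 'v) \<Rightarrow> nat \<Rightarrow> nat \<Rightarrow> 'v \<Rightarrow> 'v" where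
  "rotors m v0 \<rho> n t = fst (rotor_hist m v0 \<rho> n t ! t)"

definition root_departures :: "('v \<Rightarrow> 'v \<Rightarrow> 'v) \<Rightarrow> 'v \<Rightarrow> ('v \<Rightarrow> 'v) \<Rightarrow> nat \<Rightarrow> nat \<Rightarrow> nat" where
  "root_departures m v0 \<rho> n t =
     card {s. s < t \<and> \<not> returned m v0 \<rho> n s (Suc s mod n) \<and> pos m v0 \<rho> n s (Suc s mod n) = v0}"

lemma rotor_hist_Suc_append: "\<exists>e. rotor_hist m v0 \<rho> n (Suc t) = rotor_hist m v0 \<rho> n t @ [e]"
  by (simp only: rotor_hist.simps Let_def) blast

lemma length_rotor_hist: "length (rotor_hist m v0 \<rho> n t) = Suc t"
proof (induction t)
  case 0
  show ?case by simp
next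
  case (Suc t)
  then show ?case
    using rotor_hist_Suc_append[of m v0 \<rho> n t] by auto
qed

lemma rotor_hist_nth: "s \<le> t \<Longrightarrow> rotor_hist m v0 \<rho> n t ! s = rotor_hist m v0 \<rho> n s ! s"
proof (induction t)
  case 0
  then show ?case by simp
next
  case (Suc t)
  obtain e where "rotor_hist m v0 \<rho> n (Suc t) = rotor_hist m v0 \<rho> n t @ [e]"
    using rotor_hist_Suc_append[of m v0 \<rho> n t] by blast
  with Suc show ?case
    by (cases "s = Suc t") (simp_all add: nth_append length_rotor_hist)
qed

lemma snd_rotor_hist_nth: "s \<le> t \<Longrightarrow> snd (rotor_hist m v0 \<rho> n t ! s) = pos m v0 \<rho> n s"
  unfolding rotor_hist_nth[of s t] by (simp add: pos_def fun_eq_iff)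

lemma pos_0: "pos m v0 \<rho> n 0 i = v0"
  by (simp add: pos_def)

lemma rotors_0: "rotors m v0 \<rho> n 0 = \<rho>"
  by (simp add: rotors_def)

lemma rotor_hist_Suc_last:
  "rotor_hist m v0 \<rho> n (Suc s) ! Suc s =
     (let i = Suc s mod n; r = rotors m v0 \<rho> n s; X = pos m v0 \<rho> n s
      in if returned m v0 \<rho> n s i then (r, X)
         else let x = X i; r' = r(x := m x (r x)) in (r', X(i := r' x)))"
proof -
  have "\<forall>s'<s. snd (rotor_hist m v0 \<rho> n s ! s') = pos m v0 \<rho> n s'"
    by (simp add: snd_rotor_hist_nth)
  then have ret: "(pos m v0 \<rho> n s i = v0 \<and> (\<exists>s'<s. snd (rotor_hist m v0 \<rho> n s ! s') i \<noteq> v0))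
     \<longleftrightarrow> returned m v0 \<rho> n s i" for i
    by (auto simp: returned_def snd_rotor_hist_nth)
  show ?thesis
    unfolding rotor_hist.simps(2) Let_def snd_rotor_hist_nth[OF order.refl]
    unfolding ret rotors_def
    by (simp add: nth_append length_rotor_hist)
qed
lemma step_returned:
  assumes "returned m v0 \<rho> n s (Suc s mod n)"
  shows "pos m v0 \<rho> n (Suc s) = pos m v0 \<rho> n s" and "rotors m v0 \<rho> n (Suc s) = rotors m v0 \<rho> n s"
  using rotor_hist_Suc_last[of m v0 \<rho> n s] assms
  by (simp_all add: Let_def rotors_def pos_def fun_eq_iff)

lemma step_move:
  assumes "\<not> returned m v0 \<rho> n s (Suc s mod n)" and "x = pos m v0 \<rho> n s (Suc s mod n)"
    and "y = rotors m v0 \<rho> n s x"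
  shows "pos m v0 \<rho> n (Suc s) = (pos m v0 \<rho> n s)(Suc s mod n := m x y)"
    and "rotors m v0 \<rho> n (Suc s) = (rotors m v0 \<rho> n s)(x := m x y)"
  using rotor_hist_Suc_last[of m v0 \<rho> n s] assms
  by (simp_all add: Let_def rotors_def pos_def fun_eq_iff)

lemma pos_before_first_turn:
  assumes "\<And>s'. s' < s \<Longrightarrow> Suc s' mod n \<noteq> i"
  shows "pos m v0 \<rho> n s i = v0"
  using assms
proof (induction s)
  case 0
  show ?case by (rule pos_0)
next
  case (Suc s)
  then have "pos m v0 \<rho> n s i = v0" and "Suc s mod n \<noteq> i"
    by simp_all
  then show ?case
    by (cases "returned m v0 \<rho> n s (Suc s mod n)") (simp_all add: step_returned step_move)
qed

lemma root_departures_Suc: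
  "root_departures m v0 \<rho> n (Suc t) = root_departures m v0 \<rho> n t +
     (if \<not> returned m v0 \<rho> n t (Suc t mod n) \<and> pos m v0 \<rho> n t (Suc t mod n) = v0 then 1 else 0)"
proof -
  let ?P = "\<lambda>s. \<not> returned m v0 \<rho> n s (Suc s mod n) \<and> pos m v0 \<rho> n s (Suc s mod n) = v0"
  have "{s. s < Suc t \<and> ?P s} = (if ?P t then insert t else id) {s. s < t \<and> ?P s}"
    by (auto simp: less_Suc_eq)
  then show ?thesis
    by (cases "?P t") (simp_all add: root_departures_def)
qed

lemma root_departures_ge:
  assumes "n \<le> t"
  shows "n \<le> root_departures m v0 \<rho> n t"
proof -
  have "\<not> returned m v0 \<rho> n s (Suc s mod n) \<and> pos m v0 \<rho> n s (Suc s mod n) = v0" if "s < n" for s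
  proof -
    have "Suc s' mod n \<noteq> Suc s mod n" if "s' < s" for s'
      using \<open>s' < s\<close> \<open>s < n\<close> by (auto simp: mod_if)
    then have "pos m v0 \<rho> n s' (Suc s mod n) = v0" if "s' \<le> s" for s'
      using that by (intro pos_before_first_turn) auto
    then show ?thesis
      by (simp add: returned_def)
  qed
  then have "{..<n} \<subseteq> {s. s < t \<and> \<not> returned m v0 \<rho> n s (Suc s mod n) \<and> pos m v0 \<rho> n s (Suc s mod n) = v0}"
    using assms by auto
  from card_mono[OF _ this] show ?thesis
    by (simp add: root_departures_def)
qed

context rotor_walk
begin

lemma rotors_in_nbrs:
  assumes "rotor_config E \<rho>"
  shows "rotors m v0 \<rho> n s x \<in> nbrs E x"
proof (induction s arbitrary: x)
  case 0
  show ?case using assms by (simp add: rotors_0 rotor_config_def)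
next
  case (Suc s)
  then show ?case
    by (cases "returned m v0 \<rho> n s (Suc s mod n)") (simp_all add: step_returned step_move rotor_in_nbrs)
qed

lemma potential_invariant:
  assumes "rotor_config E \<rho>" and "0 < n" and "finite F"
    and "\<And>s'. s' < s \<Longrightarrow> pos m v0 \<rho> n s' (Suc s' mod n) \<in> F"
  shows "(\<Sum>i<n. potential (pos m v0 \<rho> n s i))
     + (\<Sum>x\<in>F. weight E v0 m x (rotors m v0 \<rho> n s x) - weight E v0 m x (\<rho> x))
     + real (root_departures m v0 \<rho> n s) / real (deg E v0) = real n * potential v0"
  using assms(4)
proof (induction s)
  case 0
  show ?case by (simp add: pos_0 rotors_0 root_departures_def)
next
  case (Suc s)
  then have IH: "(\<Sum>i<n. potential (pos m v0 \<rho> n s i))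
     + (\<Sum>x\<in>F. weight E v0 m x (rotors m v0 \<rho> n s x) - weight E v0 m x (\<rho> x))
     + real (root_departures m v0 \<rho> n s) / real (deg E v0) = real n * potential v0"
    by simp
  show ?case
  proof (cases "returned m v0 \<rho> n s (Suc s mod n)")
    case True
    then show ?thesis
      using IH by (simp add: step_returned root_departures_Suc)
  next
    case False
    define i where "i = Suc s mod n"
    define x where "x = pos m v0 \<rho> n s i"
    define y where "y = rotors m v0 \<rho> n s x"
    have "i < n" and "x \<in> F"
      using \<open>0 < n\<close> Suc.prems[of s] by (simp_all add: i_def x_def)
    have pos': "pos m v0 \<rho> n (Suc s) = (pos m v0 \<rho> n s)(i := m x y)"
      and rotors': "rotors m v0 \<rho> n (Suc s) = (rotors m v0 \<rho> n s)(x := m x y)"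
      using step_move[OF False] by (simp_all add: i_def x_def y_def)
    have "real (root_departures m v0 \<rho> n (Suc s)) / real (deg E v0)
        = real (root_departures m v0 \<rho> n s) / real (deg E v0) + (if x = v0 then 1 / real (deg E v0) else 0)"
      using False by (simp add: root_departures_Suc i_def x_def add_divide_distrib)
    moreover have "weight E v0 m x (m x y) - weight E v0 m x y
        = potential x - potential (m x y) - (if x = v0 then 1 / real (deg E v0) else 0)"
      by (rule weight_rotate) (simp add: y_def rotors_in_nbrs[OF assms(1)])
    ultimately show ?thesis
      using IH sum_fun_upd[of "{..<n}" i "\<lambda>_. potential" "pos m v0 \<rho> n s" "m x y"] \<open>i < n\<close>
        sum_fun_upd[of F x "\<lambda>z r. weight E v0 m z r - weight E v0 m z (\<rho> z)" "rotors m v0 \<rho> n s" "m x y"]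
        \<open>finite F\<close> \<open>x \<in> F\<close>
      unfolding pos' rotors' by (simp add: x_def y_def)
  qed
qed

lemma returned_potential_bound:
  assumes "rotor_config E \<rho>" and "\<forall>x. \<forall>y\<in>nbrs E x. weight E v0 m x (\<rho> x) \<le> weight E v0 m x y"
    and "0 < n"
  shows "real (card {i. i < n \<and> returned m v0 \<rho> n t i}) * potential v0
     + real (root_departures m v0 \<rho> n t) / real (deg E v0) \<le> real n * potential v0"
proof -
  let ?Ret = "{i. i < n \<and> returned m v0 \<rho> n t i}"
  define F where "F = (\<lambda>s. pos m v0 \<rho> n s (Suc s mod n)) ` {..<t}"
  have "real (card ?Ret) * potential v0 = (\<Sum>i\<in>?Ret. potential (pos m v0 \<rho> n t i))"
    by (simp add: returned_def)
  also have "\<dots> \<le> (\<Sum>i<n. potential (pos m v0 \<rho> n t i))"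
    by (rule sum_mono2) (auto simp: potential_nonneg)
  moreover have "0 \<le> (\<Sum>x\<in>F. weight E v0 m x (rotors m v0 \<rho> n t x) - weight E v0 m x (\<rho> x))"
    using assms(2) rotors_in_nbrs[OF assms(1)] by (auto intro!: sum_nonneg)
  moreover have "(\<Sum>i<n. potential (pos m v0 \<rho> n t i))
     + (\<Sum>x\<in>F. weight E v0 m x (rotors m v0 \<rho> n t x) - weight E v0 m x (\<rho> x))
     + real (root_departures m v0 \<rho> n t) / real (deg E v0) = real n * potential v0"
    by (rule potential_invariant[OF assms(1,3)]) (auto simp: F_def)
  ultimately show ?thesis
    by linarith
qed

lemma escape_prob_le_unreturned_fraction:
  assumes "rotor_config E \<rho>" and "\<forall>x. \<forall>y\<in>nbrs E x. weight E v0 m x (\<rho> x) \<le> weight E v0 m x y"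
    and "1 \<le> n" and "n \<le> t"
  shows "escape_prob E v0 \<le> real (I_count m v0 \<rho> n t) / real n"
proof -
  let ?Ret = "{i. i < n \<and> returned m v0 \<rho> n t i}"
  let ?I = "real (I_count m v0 \<rho> n t)"
  have split: "card ?Ret + I_count m v0 \<rho> n t = n"
  proof -
    have "?Ret \<union> {i. i < n \<and> \<not> returned m v0 \<rho> n t i} = {..<n}"
      by auto
    then show ?thesis
      unfolding I_count_def by (subst card_Un_disjoint[symmetric]) auto
  qed
  have "real n / real (deg E v0) \<le> real (root_departures m v0 \<rho> n t) / real (deg E v0)"
    using root_departures_ge[OF assms(4), of m v0 \<rho>] by (intro divide_right_mono) simp_all
  then have "real (card ?Ret) * potential v0 + real n / real (deg E v0) \<le> real n * potential v0"
    using returned_potential_bound[OF assms(1,2), of n t] assms(3) by linarith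
  then have "(real (card ?Ret) * green E v0 v0 + real n) / real (deg E v0)
      \<le> (real n * green E v0 v0) / real (deg E v0)"
    by (simp add: potential_def add_divide_distrib)
  then have "real (card ?Ret) * green E v0 v0 + real n \<le> real n * green E v0 v0"
    using deg_pos[of v0] by (simp add: divide_le_cancel)
  moreover have "real n * green E v0 v0 = real (card ?Ret) * green E v0 v0 + ?I * green E v0 v0"
    using split by (metis distrib_right of_nat_add)
  ultimately have "real n \<le> ?I * green E v0 v0"
    by linarith
  also have "\<dots> \<le> ?I / escape_prob E v0"
    using mult_left_mono[OF green_root_le, of ?I] by simp
  finally show ?thesis
    using escape_prob_pos assms(3) by (simp add: field_simps)
qed

end

theorem proposition2p2:
  fixes E :: "'v \<Rightarrow> 'v \<Rightarrow> bool" and v0 :: 'v and m :: "'v \<Rightarrow> 'v \<Rightarrow> 'v"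
    and \<rho>min :: "'v \<Rightarrow> 'v" and n t :: nat
  assumes "simple_graph E" and "locally_finite E" and "connected_graph E"
    and "transient E v0"
    and "rotor_mechanism E m"
    and "rotor_config E \<rho>min"
    and "\<forall>x. \<forall>y\<in>nbrs E x. weight E v0 m x (\<rho>min x) \<le> weight E v0 m x y"
    and "1 \<le> n" and "n \<le> t"
  shows "real (I_count m v0 \<rho>min n t) / real n \<ge> escape_prob E v0"
proof -
  interpret rotor_walk E v0 m
    using assms(1-5)
    by unfold_locales (auto simp: simple_graph_def locally_finite_def connected_graph_def rotor_mechanism_def)
  show ?thesis
    using escape_prob_le_unreturned_fraction[OF assms(6-9)] .
qed

end
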